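(* Let $A$ be a T-brace and suppose that the torsion subgroup of the additive group of $\zeta(\star,A)$ is a $p$-group for some prime $p$. Suppose that the additive group of $\zeta_2(\star,A)$ is not periodic. If $a,b\in\zeta_2(\star,A)$ with $a\star a\neq 0$ and $b\star b\neq 0$, then $\langle a\star a\rangle\cap\langle b\star b\rangle\neq 0$, and in this case $\langle a\star a\rangle=\langle b\star b\rangle$. Here $\langle x\rangle$ denotes the cyclic subgroup of $(A,+)$ generated by $x$.
   Context: A (left) brace is a set $A$ with two operations $+$ and $\cdot$ such that $(A,+)$ is an abelian group, $(A,\cdot)$ is a group, and $a(b+c)=ab+ac-a$ for all $a,b,c\in A$. Put $a\star b=ab-a-b$. A subbrace is a subset which is a subgroup of both $(A,+)$ and $(A,\cdot)$; a subbrace $L$ is an ideal if $a\star z, z\star a\in L$ for all $a\in A$, $z\in L$, and then the quotient brace $A/L$ is defined. $A$ is a T-brace if whenever $I$ is an ideal of $J$ and $J$ is an ideal of $A$, then $I$ is an ideal of $A$. The $\star$-center is $\zeta(\star,A)=\{a: a\star x=x\star a=0\ \forall x\}$; $\zeta_2(\star,A)$ is given by $\zeta_2(\star,A)/\zeta(\star,A)=\zeta(\star,A/\zeta(\star,A))$. *)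

theory Defs
  imports "HOL-Algebra.Algebra"
begin

record 'a brace =
  addg :: "'a monoid"
  mulg :: "'a monoid"

definition bcarrier :: "'a brace \<Rightarrow> 'a set" where
  "bcarrier A = carrier (addg A)"

definition bplus :: "'a brace \<Rightarrow> 'a \<Rightarrow> 'a \<Rightarrow> 'a" where
  "bplus A x y = x \<otimes>\<^bsub>addg A\<^esub> y"

definition btimes :: "'a brace \<Rightarrow> 'a \<Rightarrow> 'a \<Rightarrow> 'a" where
  "btimes A x y = x \<otimes>\<^bsub>mulg A\<^esub> y"

definition bneg :: "'a brace \<Rightarrow> 'a \<Rightarrow> 'a" where
  "bneg A x = inv\<^bsub>addg A\<^esub> x"

definition bzero :: "'a brace \<Rightarrow> 'a" where
  "bzero A = \<one>\<^bsub>addg A\<^esub>"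

definition is_brace :: "'a brace \<Rightarrow> bool" where
  "is_brace A \<longleftrightarrow> comm_group (addg A) \<and> group (mulg A)
     \<and> carrier (mulg A) = carrier (addg A)
     \<and> (\<forall>a\<in>bcarrier A. \<forall>b\<in>bcarrier A. \<forall>c\<in>bcarrier A.
          btimes A a (bplus A b c) = bplus A (bplus A (btimes A a b) (btimes A a c)) (bneg A a))"

definition bstar :: "'a brace \<Rightarrow> 'a \<Rightarrow> 'a \<Rightarrow> 'a" where
  "bstar A a b = bplus A (bplus A (btimes A a b) (bneg A a)) (bneg A b)"

definition subbrace :: "'a brace \<Rightarrow> 'a set \<Rightarrow> bool" where
  "subbrace A S \<longleftrightarrow> subgroup S (addg A) \<and> subgroup S (mulg A)"

definition ideal_in :: "'a brace \<Rightarrow> 'a set \<Rightarrow> 'a set \<Rightarrow> bool" where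
  "ideal_in A J L \<longleftrightarrow> subbrace A J \<and> subbrace A L \<and> L \<subseteq> J
     \<and> (\<forall>a\<in>J. \<forall>z\<in>L. bstar A a z \<in> L \<and> bstar A z a \<in> L)"

definition brace_ideal :: "'a brace \<Rightarrow> 'a set \<Rightarrow> bool" where
  "brace_ideal A L \<longleftrightarrow> ideal_in A (bcarrier A) L"

definition T_brace :: "'a brace \<Rightarrow> bool" where
  "T_brace A \<longleftrightarrow> is_brace A \<and>
     (\<forall>I J. brace_ideal A J \<and> ideal_in A J I \<longrightarrow> brace_ideal A I)"

definition star_center :: "'a brace \<Rightarrow> 'a set" where
  "star_center A = {a \<in> bcarrier A. \<forall>x\<in>bcarrier A.
       bstar A a x = bzero A \<and> bstar A x a = bzero A}"

text \<open>Quotient brace A/L: quotient of the additive and of the multiplicative group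
  by L (for an ideal L the additive and multiplicative cosets coincide).\<close>
definition quot_brace :: "'a brace \<Rightarrow> 'a set \<Rightarrow> 'a set brace" where
  "quot_brace A L = \<lparr> addg = addg A Mod L, mulg = mulg A Mod L \<rparr>"

definition star_center2 :: "'a brace \<Rightarrow> 'a set" where
  "star_center2 A = {a \<in> bcarrier A.
       r_coset (addg A) (star_center A) a \<in> star_center (quot_brace A (star_center A))}"

text \<open>additive order (0 = infinite order) and cyclic additive subgroup\<close>
definition add_ord :: "'a brace \<Rightarrow> 'a \<Rightarrow> nat" where
  "add_ord A x = group.ord (addg A) x"

definition add_cyclic :: "'a brace \<Rightarrow> 'a \<Rightarrow> 'a set" where
  "add_cyclic A x = generate (addg A) {x}"

end

(* For x in \<zeta>\<^sub>2 all stars x \<star> y and y \<star> x are central. For central w the additive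
   subgroup generated by x + w and x \<star> x is an ideal of the ideal \<zeta> + \<langle>x\<rangle>, hence of A
   by the T-property, so every star with x lies in \<langle>x + w\<rangle> + \<langle>x \<star> x\<rangle>. If x has
   infinite order modulo \<zeta>, or (comparing w = 0 with w = v) \<zeta> contains an element v of
   infinite order, the \<langle>x + w\<rangle>-component must vanish and all stars with x lie in
   \<langle>x \<star> x\<rangle>. Applied to p x this gives p (x \<star> x) = 0, because the torsion of \<zeta> is a
   p-group. Cyclic groups of order p that meet nontrivially coincide; for two such x, y either
   a nonzero star of x and y lies in both \<langle>x \<star> x\<rangle> and \<langle>y \<star> y\<rangle>, or both squares lie in
   \<langle>z \<star> z\<rangle> for z = x + y or z = x + (p + 1) y. Finally, an element of \<zeta>\<^sub>2 of infinite
   order either has a nonzero multiple in \<zeta>, of infinite order, or has infinite order modulo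
   \<zeta>; in the latter case the squares of the other elements of \<zeta>\<^sub>2 are integer combinations
   of squares of elements of infinite order modulo \<zeta>. *)

theory Submission
  imports Defs
begin

lemma (in group) int_pow_of_hom_on_subgroup:
  assumes H: "subgroup H G" and f: "\<And>a. a \<in> H \<Longrightarrow> f a \<in> carrier G"
    and f_mult: "\<And>a b. a \<in> H \<Longrightarrow> b \<in> H \<Longrightarrow> f (a \<otimes> b) = f a \<otimes> f b" and x: "x \<in> H"
  shows "f (x [^] (n::int)) = f x [^] n"
proof -
  have "f \<in> hom (G\<lparr>carrier := H\<rparr>) G" by (rule homI) (auto simp: f f_mult)
  then have "f (x [^]\<^bsub>G\<lparr>carrier := H\<rparr>\<^esub> n) = f x [^] n"
    using hom_int_pow subgroup.subgroup_is_group[OF H is_group] x is_group by fastforce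
  then show ?thesis using int_pow_consistent[OF H x] by simp
qed

lemma (in comm_group) subgroup_adjoin:
  assumes H: "subgroup H G" and x: "x \<in> carrier G"
  shows "subgroup {h \<otimes> x [^] (n::int) | h n. h \<in> H} G"
proof (rule subgroupI)
  have HG: "H \<subseteq> carrier G" using H subgroup.subset by blast
  then show "{h \<otimes> x [^] (n::int) | h n. h \<in> H} \<subseteq> carrier G" using x by auto
  show "{h \<otimes> x [^] (n::int) | h n. h \<in> H} \<noteq> {}" using subgroup.one_closed[OF H] by blast
  fix s t assume "s \<in> {h \<otimes> x [^] (n::int) | h n. h \<in> H}" "t \<in> {h \<otimes> x [^] (n::int) | h n. h \<in> H}"
  then obtain h n h' n' where h: "h \<in> H" "h' \<in> H"
    and s: "s = h \<otimes> x [^] (n::int)" and t: "t = h' \<otimes> x [^] (n'::int)" by blast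
  have "inv s = inv h \<otimes> x [^] (- n)" using s h HG x by (auto simp: inv_mult int_pow_neg)
  then show "inv s \<in> {h \<otimes> x [^] (n::int) | h n. h \<in> H}"
    using subgroup.m_inv_closed[OF H h(1)] by blast
  have "h \<in> carrier G" "h' \<in> carrier G" using h HG by auto
  then have "s \<otimes> t = (h \<otimes> h') \<otimes> x [^] (n + n')" using s t x by (simp add: int_pow_mult m_assoc m_lcomm)
  then show "s \<otimes> t \<in> {h \<otimes> x [^] (n::int) | h n. h \<in> H}"
    using subgroup.m_closed[OF H h] by blast
qed

text \<open>A power \<open>w [^] j\<close> with \<open>p\<close> not dividing \<open>j\<close> has an inverse exponent modulo \<open>p\<close> (Bezout).\<close>
lemma (in group) generate_eq_if_pow_prime_eq_one:
  assumes p: "Factorial_Ring.prime (p::nat)" and w: "w \<in> carrier G" and wp: "w [^] int p = \<one>"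
    and u: "u \<in> generate G {w}" and u_ne: "u \<noteq> \<one>"
  shows "generate G {u} = generate G {w}"
proof -
  obtain j where j: "u = w [^] (j::int)" using u generate_pow[OF w] by blast
  have not_dvd: "\<not> int p dvd j"
  proof
    assume "int p dvd j"
    then obtain t where "j = int p * t" by blast
    then have "u = (w [^] int p) [^] t" using j w int_pow_pow by simp
    then show False using u_ne wp by simp
  qed
  have "coprime (int p) j" using not_dvd p by (simp add: prime_imp_coprime prime_int_nat_transfer)
  moreover obtain s i where "s * int p + i * j = gcd (int p) j" using bezout_int by blast
  ultimately have "i * j = 1 + int p * (- s)" by (simp add: algebra_simps)
  then obtain t where it: "i * j = 1 + int p * t" by blast
  have "u [^] i = w [^] (1 + int p * t)" using j w it int_pow_pow by (simp add: mult.commute)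
  also have "\<dots> = w [^] (1::int) \<otimes> (w [^] int p) [^] t" using w by (simp add: int_pow_mult int_pow_pow)
  also have "\<dots> = w" using wp w by simp
  finally have w_eq: "w = u [^] i" by simp
  have u_carrier: "u \<in> carrier G" using j w by simp
  show ?thesis
  proof
    show "generate G {u} \<subseteq> generate G {w}"
      using generate_subgroup_incl[of "{u}", OF _ generate_is_subgroup] u w by simp
    have "w \<in> generate G {u}"
      unfolding w_eq using subgroup_int_pow_closed[OF generate_is_subgroup generate.incl] u_carrier by simp
    then show "generate G {w} \<subseteq> generate G {u}"
      using generate_subgroup_incl[of "{w}", OF _ generate_is_subgroup] u_carrier by simp
  qed
qed

lemma prime_power_dvd_prime:
  assumes p: "Factorial_Ring.prime (p::nat)" and N: "N = 0 \<or> (\<exists>k. N = p ^ k)"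
    and dvd: "int N dvd int p * int p * j - int p"
  shows "N dvd p"
proof -
  have p1: "p > 1" using p prime_gt_1_nat by blast
  have factor: "int p * int p * j - int p = int p * (int p * j - 1)" by (simp add: algebra_simps)
  have not_dvd: "\<not> int p dvd int p * j - 1" using p1 by (simp add: dvd_diff_right_iff)
  then have "int p * int p * j - int p \<noteq> 0" using factor p1 by auto
  then obtain k where k: "N = p ^ k" using N dvd by auto
  show ?thesis
  proof (cases "k \<le> 1")
    case True
    then show ?thesis using k by (auto simp: le_Suc_eq)
  next
    case False
    then have "p ^ 2 dvd N" using k le_imp_power_dvd[of 2 k p] by simp
    then have "p * p dvd N" by (simp add: power2_eq_square)
    then have "int p * int p dvd int p * (int p * j - 1)"
      using dvd factor by (metis dvd_trans int_dvd_int_iff of_nat_mult)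
    then show ?thesis using not_dvd p1 by simp
  qed
qed

section \<open>Star calculus in a left brace\<close>

locale left_brace =
  fixes A :: "'a brace"
  assumes is_brace: "is_brace A"
begin

abbreviation (input) G where "G \<equiv> addg A"
abbreviation (input) M where "M \<equiv> mulg A"
abbreviation add (infixl "+\<^sub>A" 65) where "x +\<^sub>A y \<equiv> x \<otimes>\<^bsub>addg A\<^esub> y"
abbreviation neg ("-\<^sub>A _" [81] 80) where "-\<^sub>A x \<equiv> inv\<^bsub>addg A\<^esub> x"
abbreviation zero ("0\<^sub>A") where "0\<^sub>A \<equiv> \<one>\<^bsub>addg A\<^esub>"
abbreviation mult (infixl "\<cdot>\<^sub>A" 72) where "x \<cdot>\<^sub>A y \<equiv> x \<otimes>\<^bsub>mulg A\<^esub> y"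
abbreviation int_mult (infixr "\<times>\<^sub>A" 75) where "n \<times>\<^sub>A x \<equiv> x [^]\<^bsub>addg A\<^esub> (n::int)"
abbreviation star (infixl "\<star>" 70) where "x \<star> y \<equiv> bstar A x y"

sublocale G: comm_group G using is_brace unfolding is_brace_def by auto
sublocale M: group M using is_brace unfolding is_brace_def by auto

lemma carrier_mulg [simp]: "carrier M = carrier G"
  using is_brace unfolding is_brace_def by auto

lemma left_distrib:
  "a \<in> carrier G \<Longrightarrow> b \<in> carrier G \<Longrightarrow> c \<in> carrier G \<Longrightarrow> a \<cdot>\<^sub>A (b +\<^sub>A c) = a \<cdot>\<^sub>A b +\<^sub>A a \<cdot>\<^sub>A c +\<^sub>A -\<^sub>A a"
  using is_brace unfolding is_brace_def bcarrier_def btimes_def bplus_def bneg_def by auto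

lemma one_mulg [simp]: "\<one>\<^bsub>M\<^esub> = 0\<^sub>A"
proof -
  have one: "\<one>\<^bsub>M\<^esub> \<in> carrier G" using M.one_closed by simp
  then have "-\<^sub>A \<one>\<^bsub>M\<^esub> = 0\<^sub>A" using left_distrib[OF one G.one_closed G.one_closed] by simp
  then show ?thesis using one by (metis G.inv_inv G.inv_one)
qed

lemma mult_closed [simp]: "a \<in> carrier G \<Longrightarrow> b \<in> carrier G \<Longrightarrow> a \<cdot>\<^sub>A b \<in> carrier G"
  using M.m_closed by simp

lemma mult_zero_left [simp]: "x \<in> carrier G \<Longrightarrow> 0\<^sub>A \<cdot>\<^sub>A x = x"
  using M.l_one by simp

lemma mult_zero_right [simp]: "x \<in> carrier G \<Longrightarrow> x \<cdot>\<^sub>A 0\<^sub>A = x"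
  using M.r_one by simp

lemma star_eq: "a \<star> b = a \<cdot>\<^sub>A b +\<^sub>A -\<^sub>A a +\<^sub>A -\<^sub>A b"
  unfolding bstar_def bplus_def btimes_def bneg_def ..

lemma star_closed [simp]: "a \<in> carrier G \<Longrightarrow> b \<in> carrier G \<Longrightarrow> a \<star> b \<in> carrier G"
  unfolding star_eq by simp

lemma mult_eq_star_add: "a \<in> carrier G \<Longrightarrow> b \<in> carrier G \<Longrightarrow> a \<cdot>\<^sub>A b = a \<star> b +\<^sub>A (a +\<^sub>A b)"
proof -
  assume "a \<in> carrier G" "b \<in> carrier G"
  then have "a \<star> b = a \<cdot>\<^sub>A b +\<^sub>A -\<^sub>A (a +\<^sub>A b)" unfolding star_eq by (simp add: G.m_assoc G.inv_mult)
  with \<open>a \<in> carrier G\<close> \<open>b \<in> carrier G\<close> show ?thesis by (simp add: G.m_assoc)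
qed

lemma star_zero_left [simp]: "x \<in> carrier G \<Longrightarrow> 0\<^sub>A \<star> x = 0\<^sub>A"
  unfolding star_eq by simp

lemma star_zero_right [simp]: "x \<in> carrier G \<Longrightarrow> x \<star> 0\<^sub>A = 0\<^sub>A"
  unfolding star_eq by simp

lemma star_add_right:
  assumes "x \<in> carrier G" "u \<in> carrier G" "v \<in> carrier G"
  shows "x \<star> (u +\<^sub>A v) = x \<star> u +\<^sub>A x \<star> v"
proof -
  have "x \<cdot>\<^sub>A (u +\<^sub>A v) +\<^sub>A x = x \<cdot>\<^sub>A u +\<^sub>A x \<cdot>\<^sub>A v"
    using left_distrib assms by (simp add: G.m_assoc)
  then have "x \<star> (u +\<^sub>A v) +\<^sub>A (x +\<^sub>A u +\<^sub>A (v +\<^sub>A x)) = x \<star> u +\<^sub>A x \<star> v +\<^sub>A (x +\<^sub>A u +\<^sub>A (v +\<^sub>A x))"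
    using assms by (simp add: mult_eq_star_add G.m_ac)
  then show ?thesis using assms by simp
qed

lemma star_mult_left:
  assumes "a \<in> carrier G" "b \<in> carrier G" "u \<in> carrier G"
  shows "(a \<cdot>\<^sub>A b) \<star> u = a \<star> (b \<star> u) +\<^sub>A a \<star> u +\<^sub>A b \<star> u"
proof -
  have distrib': "a \<cdot>\<^sub>A (v +\<^sub>A w) +\<^sub>A a = a \<cdot>\<^sub>A v +\<^sub>A a \<cdot>\<^sub>A w" if "v \<in> carrier G" "w \<in> carrier G" for v w
    using left_distrib assms that by (simp add: G.m_assoc)
  have "(a \<cdot>\<^sub>A b) \<cdot>\<^sub>A u +\<^sub>A a +\<^sub>A a = a \<cdot>\<^sub>A (b \<star> u +\<^sub>A (b +\<^sub>A u)) +\<^sub>A a +\<^sub>A a"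
    using assms by (simp add: M.m_assoc mult_eq_star_add[of b u])
  also have "\<dots> = a \<cdot>\<^sub>A (b \<star> u) +\<^sub>A (a \<cdot>\<^sub>A (b +\<^sub>A u) +\<^sub>A a)"
    using assms by (simp add: distrib' G.m_assoc)
  also have "\<dots> = a \<cdot>\<^sub>A (b \<star> u) +\<^sub>A (a \<cdot>\<^sub>A b +\<^sub>A a \<cdot>\<^sub>A u)"
    using assms by (simp add: distrib')
  finally have "(a \<cdot>\<^sub>A b) \<star> u +\<^sub>A (a \<cdot>\<^sub>A b +\<^sub>A u +\<^sub>A (a +\<^sub>A a)) =
      a \<star> (b \<star> u) +\<^sub>A a \<star> u +\<^sub>A b \<star> u +\<^sub>A (a \<cdot>\<^sub>A b +\<^sub>A u +\<^sub>A (a +\<^sub>A a))"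
    using assms by (simp add: mult_eq_star_add[of "a \<cdot>\<^sub>A b" u] mult_eq_star_add[of a "b \<star> u"]
        mult_eq_star_add[of a u] G.m_ac)
  then show ?thesis using assms by simp
qed

lemma star_neg_right: "x \<in> carrier G \<Longrightarrow> u \<in> carrier G \<Longrightarrow> x \<star> (-\<^sub>A u) = -\<^sub>A (x \<star> u)"
proof -
  assume x: "x \<in> carrier G" and u: "u \<in> carrier G"
  then have "x \<star> (-\<^sub>A u) +\<^sub>A x \<star> u = 0\<^sub>A" using star_add_right[of x "-\<^sub>A u" u] by simp
  then show ?thesis using G.inv_equality x u by simp
qed

lemma star_int_mult_right: "y \<in> carrier G \<Longrightarrow> x \<in> carrier G \<Longrightarrow> y \<star> (n \<times>\<^sub>A x) = n \<times>\<^sub>A (y \<star> x)"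
  using G.int_pow_of_hom_on_subgroup[OF G.subgroup_self, of "(\<star>) y"] star_add_right by simp

section \<open>The star centres\<close>

abbreviation zeta where "zeta \<equiv> star_center A"

lemma mem_zeta_iff: "z \<in> zeta \<longleftrightarrow> z \<in> carrier G \<and> (\<forall>x\<in>carrier G. z \<star> x = 0\<^sub>A \<and> x \<star> z = 0\<^sub>A)"
  unfolding star_center_def bcarrier_def bzero_def by simp

lemma zeta_subset: "zeta \<subseteq> carrier G"
  using mem_zeta_iff by blast

lemma star_zeta_left [simp]: "z \<in> zeta \<Longrightarrow> x \<in> carrier G \<Longrightarrow> z \<star> x = 0\<^sub>A"
  using mem_zeta_iff by blast

lemma star_zeta_right [simp]: "z \<in> zeta \<Longrightarrow> x \<in> carrier G \<Longrightarrow> x \<star> z = 0\<^sub>A"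
  using mem_zeta_iff by blast

lemma mult_zeta_left: "z \<in> zeta \<Longrightarrow> y \<in> carrier G \<Longrightarrow> z \<cdot>\<^sub>A y = z +\<^sub>A y"
  using mult_eq_star_add zeta_subset by auto

lemma mult_zeta_right: "z \<in> zeta \<Longrightarrow> y \<in> carrier G \<Longrightarrow> y \<cdot>\<^sub>A z = y +\<^sub>A z"
  using mult_eq_star_add zeta_subset by auto

lemma subgroup_zeta: "subgroup zeta G"
proof (rule G.subgroupI)
  show "zeta \<subseteq> carrier G" by (rule zeta_subset)
  show "zeta \<noteq> {}" using mem_zeta_iff[of "0\<^sub>A"] by auto
next
  fix z assume z: "z \<in> zeta"
  then have zc: "z \<in> carrier G" using zeta_subset by blast
  show "-\<^sub>A z \<in> zeta" unfolding mem_zeta_iff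
  proof (intro conjI ballI)
    fix x assume x: "x \<in> carrier G"
    show "x \<star> (-\<^sub>A z) = 0\<^sub>A" using star_neg_right[OF x zc] z x by simp
    have "0\<^sub>A = (z \<cdot>\<^sub>A (-\<^sub>A z)) \<star> x" using mult_zeta_left[OF z, of "-\<^sub>A z"] zc x by simp
    also have "\<dots> = (-\<^sub>A z) \<star> x" using star_mult_left[of z "-\<^sub>A z" x] z zc x by simp
    finally show "(-\<^sub>A z) \<star> x = 0\<^sub>A" by simp
  qed (use zc in simp)
next
  fix z w assume z: "z \<in> zeta" and w: "w \<in> zeta"
  then have zc: "z \<in> carrier G" "w \<in> carrier G" using zeta_subset by auto
  show "z +\<^sub>A w \<in> zeta" unfolding mem_zeta_iff
  proof (intro conjI ballI)
    fix x assume x: "x \<in> carrier G"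
    show "x \<star> (z +\<^sub>A w) = 0\<^sub>A" using star_add_right[OF x zc] z w x by simp
    have "(z +\<^sub>A w) \<star> x = (z \<cdot>\<^sub>A w) \<star> x" using mult_zeta_left[OF z, of w] zc by simp
    also have "\<dots> = 0\<^sub>A" using star_mult_left[of z w x] z w zc x by simp
    finally show "(z +\<^sub>A w) \<star> x = 0\<^sub>A" .
  qed (use zc in simp)
qed

lemma zeta_add_cancel_left:
  assumes a: "a \<in> zeta" and b: "b \<in> carrier G" and ab: "a +\<^sub>A b \<in> zeta"
  shows "b \<in> zeta"
proof -
  have "b = -\<^sub>A a +\<^sub>A (a +\<^sub>A b)" using a b zeta_subset by (auto simp: G.m_assoc[symmetric])
  then show ?thesis
    using subgroup.m_closed[OF subgroup_zeta subgroup.m_inv_closed[OF subgroup_zeta a] ab] by simp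
qed

lemma zeta_add_cancel_right: "a \<in> carrier G \<Longrightarrow> b \<in> zeta \<Longrightarrow> a +\<^sub>A b \<in> zeta \<Longrightarrow> a \<in> zeta"
  using zeta_add_cancel_left[of b a] zeta_subset G.m_comm by auto

text \<open>The witness \<open>c = y - x \<star> y\<close> satisfies \<open>x c = x + y\<close> and \<open>c \<star> u = y \<star> u\<close>, so the
  formula for \<open>(x c) \<star> u\<close> applies.\<close>
lemma star_add_left_of_star_zeta:
  assumes x: "x \<in> carrier G" and y: "y \<in> carrier G" and u: "u \<in> carrier G" and xy: "x \<star> y \<in> zeta"
  shows "(x +\<^sub>A y) \<star> u = x \<star> (y \<star> u) +\<^sub>A x \<star> u +\<^sub>A y \<star> u"
proof -
  have w: "-\<^sub>A (x \<star> y) \<in> zeta" "-\<^sub>A (x \<star> y) \<in> carrier G"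
    using xy subgroup.m_inv_closed[OF subgroup_zeta] zeta_subset by auto
  define c where "c = -\<^sub>A (x \<star> y) +\<^sub>A y"
  have c: "c \<in> carrier G" unfolding c_def using w y by simp
  have "x \<star> c = x \<star> y" unfolding c_def using star_add_right[OF x w(2) y] w x y by simp
  then have "x \<cdot>\<^sub>A c = x \<star> y +\<^sub>A (x +\<^sub>A (-\<^sub>A (x \<star> y) +\<^sub>A y))"
    using mult_eq_star_add[OF x c] unfolding c_def by simp
  also have "\<dots> = x +\<^sub>A (x \<star> y +\<^sub>A (-\<^sub>A (x \<star> y) +\<^sub>A y))" using x y w G.m_lcomm by simp
  also have "\<dots> = x +\<^sub>A y" using x y w by (simp add: G.m_assoc[symmetric])
  finally have "x \<cdot>\<^sub>A c = x +\<^sub>A y" .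
  moreover have "c \<star> u = y \<star> u"
    unfolding c_def using mult_zeta_left[OF w(1) y] star_mult_left[OF w(2) y u] w y u by simp
  ultimately show ?thesis using star_mult_left[OF x c u] by simp
qed

definition zeta2 where
  "zeta2 = {x \<in> carrier G. \<forall>y\<in>carrier G. x \<star> y \<in> zeta \<and> y \<star> x \<in> zeta}"

lemma zeta2_subset: "zeta2 \<subseteq> carrier G"
  unfolding zeta2_def by auto

lemma star_zeta2_left: "x \<in> zeta2 \<Longrightarrow> u \<in> carrier G \<Longrightarrow> x \<star> u \<in> zeta"
  unfolding zeta2_def by auto

lemma star_zeta2_right: "x \<in> zeta2 \<Longrightarrow> u \<in> carrier G \<Longrightarrow> u \<star> x \<in> zeta"
  unfolding zeta2_def by auto

lemma zeta_subset_zeta2: "zeta \<subseteq> zeta2"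
  unfolding zeta2_def using zeta_subset subgroup.one_closed[OF subgroup_zeta] by auto

lemma star_add_left:
  "x \<in> zeta2 \<Longrightarrow> y \<in> zeta2 \<Longrightarrow> u \<in> carrier G \<Longrightarrow> (x +\<^sub>A y) \<star> u = x \<star> u +\<^sub>A y \<star> u"
  using star_add_left_of_star_zeta[of x y u] zeta2_subset star_zeta2_left by auto

lemma star_neg_left:
  assumes x: "x \<in> zeta2" and u: "u \<in> carrier G"
  shows "(-\<^sub>A x) \<star> u = -\<^sub>A (x \<star> u)"
proof -
  have xc: "x \<in> carrier G" using x zeta2_subset by blast
  define s where "s = (-\<^sub>A x) \<star> u"
  define t where "t = -\<^sub>A (x \<star> u)"
  have sc: "s \<in> carrier G" unfolding s_def using xc u by simp
  have xu: "x \<star> u \<in> carrier G" using xc u by simp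
  have t: "t \<in> zeta" "t \<in> carrier G"
    unfolding t_def using subgroup.m_inv_closed[OF subgroup_zeta star_zeta2_left[OF x u]] zeta_subset by auto
  have "0\<^sub>A = x \<star> s +\<^sub>A x \<star> u +\<^sub>A s"
    using star_add_left_of_star_zeta[OF xc G.inv_closed[OF xc] u star_zeta2_left[OF x G.inv_closed[OF xc]]]
      xc u unfolding s_def by simp
  then have "x \<star> s +\<^sub>A s +\<^sub>A x \<star> u = 0\<^sub>A" using xc sc xu by (simp add: G.m_ac)
  then have sum: "x \<star> s +\<^sub>A s = t" unfolding t_def using xc sc xu by (simp add: G.inv_equality)
  have "x \<cdot>\<^sub>A s = x \<star> s +\<^sub>A s +\<^sub>A x" using mult_eq_star_add[OF xc sc] xc sc by (simp add: G.m_ac)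
  also have "\<dots> = x \<star> t +\<^sub>A t +\<^sub>A x" using sum t xc by simp
  also have "\<dots> = x \<cdot>\<^sub>A t" using mult_eq_star_add[OF xc t(2)] xc t by (simp add: G.m_ac)
  finally have "s = t" using xc sc t M.l_cancel[of x s t] by simp
  then show ?thesis unfolding s_def t_def .
qed

lemma subgroup_zeta2: "subgroup zeta2 G"
proof (rule G.subgroupI)
  show "zeta2 \<subseteq> carrier G" by (rule zeta2_subset)
  show "zeta2 \<noteq> {}" using zeta_subset_zeta2 subgroup.one_closed[OF subgroup_zeta] by blast
next
  fix x assume x: "x \<in> zeta2"
  then have xc: "x \<in> carrier G" using zeta2_subset by blast
  show "-\<^sub>A x \<in> zeta2" unfolding zeta2_def
    using xc star_neg_left[OF x] star_neg_right[OF _ xc] star_zeta2_left[OF x] star_zeta2_right[OF x]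
      subgroup.m_inv_closed[OF subgroup_zeta] by auto
next
  fix x y assume x: "x \<in> zeta2" and y: "y \<in> zeta2"
  then have xc: "x \<in> carrier G" "y \<in> carrier G" using zeta2_subset by auto
  show "x +\<^sub>A y \<in> zeta2" unfolding zeta2_def
    using xc star_add_left[OF x y] star_add_right[OF _ xc] star_zeta2_left x y star_zeta2_right
      subgroup.m_closed[OF subgroup_zeta] by auto
qed

lemma star_int_mult_left:
  assumes "x \<in> zeta2" "y \<in> carrier G"
  shows "(n \<times>\<^sub>A x) \<star> y = n \<times>\<^sub>A (x \<star> y)"
proof (rule G.int_pow_of_hom_on_subgroup[OF subgroup_zeta2 _ _ \<open>x \<in> zeta2\<close>])
  show "a \<star> y \<in> carrier G" if "a \<in> zeta2" for a using that zeta2_subset assms by auto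
qed (use star_add_left assms in simp)

lemma coset_mult:
  assumes u: "u \<in> carrier G" and v: "v \<in> carrier G"
  shows "set_mult M (zeta #>\<^bsub>G\<^esub> u) (zeta #>\<^bsub>G\<^esub> v) = zeta #>\<^bsub>G\<^esub> (u \<cdot>\<^sub>A v)"
proof
  show "set_mult M (zeta #>\<^bsub>G\<^esub> u) (zeta #>\<^bsub>G\<^esub> v) \<subseteq> zeta #>\<^bsub>G\<^esub> (u \<cdot>\<^sub>A v)"
  proof
    fix t assume "t \<in> set_mult M (zeta #>\<^bsub>G\<^esub> u) (zeta #>\<^bsub>G\<^esub> v)"
    then obtain z z' where z: "z \<in> zeta" "z' \<in> zeta" and t: "t = (z +\<^sub>A u) \<cdot>\<^sub>A (z' +\<^sub>A v)"
      unfolding set_mult_def r_coset_def by auto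
    have zc: "z \<in> carrier G" "z' \<in> carrier G" using z zeta_subset by auto
    have uv: "u \<cdot>\<^sub>A v \<in> carrier G" using u v by simp
    have "t = (z \<cdot>\<^sub>A u) \<cdot>\<^sub>A (v \<cdot>\<^sub>A z')"
      using t mult_zeta_left[OF z(1) u] mult_zeta_left[OF z(2) v] mult_zeta_right[OF z(2) v] zc v
      by (simp add: G.m_comm)
    also have "\<dots> = z \<cdot>\<^sub>A ((u \<cdot>\<^sub>A v) \<cdot>\<^sub>A z')" using zc u v by (simp add: M.m_assoc)
    also have "\<dots> = (z +\<^sub>A z') +\<^sub>A u \<cdot>\<^sub>A v"
      using mult_zeta_right[OF z(2) uv] mult_zeta_left[OF z(1)] zc uv by (simp add: G.m_ac)
    finally show "t \<in> zeta #>\<^bsub>G\<^esub> (u \<cdot>\<^sub>A v)"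
      unfolding r_coset_def using subgroup.m_closed[OF subgroup_zeta z] by auto
  qed
next
  show "zeta #>\<^bsub>G\<^esub> (u \<cdot>\<^sub>A v) \<subseteq> set_mult M (zeta #>\<^bsub>G\<^esub> u) (zeta #>\<^bsub>G\<^esub> v)"
  proof
    fix t assume "t \<in> zeta #>\<^bsub>G\<^esub> (u \<cdot>\<^sub>A v)"
    then obtain z where z: "z \<in> zeta" and t: "t = z +\<^sub>A u \<cdot>\<^sub>A v" unfolding r_coset_def by auto
    have "t = z \<cdot>\<^sub>A (u \<cdot>\<^sub>A v)" using t mult_zeta_left[OF z] u v by simp
    also have "\<dots> = (z +\<^sub>A u) \<cdot>\<^sub>A (0\<^sub>A +\<^sub>A v)"
      using mult_zeta_left[OF z u] z zeta_subset u v by (auto simp flip: M.m_assoc)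
    finally have "t = (z +\<^sub>A u) \<cdot>\<^sub>A (0\<^sub>A +\<^sub>A v)" .
    moreover have "z +\<^sub>A u \<in> zeta #>\<^bsub>G\<^esub> u" "0\<^sub>A +\<^sub>A v \<in> zeta #>\<^bsub>G\<^esub> v"
      using G.rcosI[OF _ zeta_subset] z u v subgroup.one_closed[OF subgroup_zeta] by blast+
    ultimately show "t \<in> set_mult M (zeta #>\<^bsub>G\<^esub> u) (zeta #>\<^bsub>G\<^esub> v)"
      unfolding set_mult_def by blast
  qed
qed

lemma star_quot_brace:
  assumes u: "u \<in> carrier G" and v: "v \<in> carrier G"
  shows "bstar (quot_brace A zeta) (zeta #>\<^bsub>G\<^esub> u) (zeta #>\<^bsub>G\<^esub> v) = zeta #>\<^bsub>G\<^esub> (u \<star> v)"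
proof -
  have normal: "zeta \<lhd> G" using G.subgroup_imp_normal[OF subgroup_zeta] .
  have inv: "inv\<^bsub>G Mod zeta\<^esub> (zeta #>\<^bsub>G\<^esub> x) = zeta #>\<^bsub>G\<^esub> (-\<^sub>A x)" if "x \<in> carrier G" for x
    using normal.inv_FactGroup[OF normal] normal.rcos_inv[OF normal that] G.rcosetsI[OF zeta_subset that]
    unfolding FactGroup_def by simp
  show ?thesis
    unfolding bstar_def bplus_def btimes_def bneg_def quot_brace_def
    using u v by (simp add: coset_mult inv normal.rcos_sum[OF normal] star_eq)
qed

lemma star_center2_subset_zeta2: "star_center2 A \<subseteq> zeta2"
proof
  fix a assume "a \<in> star_center2 A"
  then have a: "a \<in> carrier G" and central: "zeta #>\<^bsub>G\<^esub> a \<in> star_center (quot_brace A zeta)"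
    unfolding star_center2_def bcarrier_def by auto
  have coset_mem: "zeta #>\<^bsub>G\<^esub> y \<in> bcarrier (quot_brace A zeta)" if "y \<in> carrier G" for y
    unfolding bcarrier_def quot_brace_def FactGroup_def using G.rcosetsI[OF zeta_subset that] by auto
  have coset_trivial: "w \<in> zeta" if "w \<in> carrier G" "zeta #>\<^bsub>G\<^esub> w = zeta" for w
    using G.rcos_self[OF that(1) subgroup_zeta] that(2) by simp
  show "a \<in> zeta2" unfolding zeta2_def
  proof (intro CollectI conjI ballI a)
    fix y assume y: "y \<in> carrier G"
    have "bstar (quot_brace A zeta) (zeta #>\<^bsub>G\<^esub> a) (zeta #>\<^bsub>G\<^esub> y) = zeta"
      "bstar (quot_brace A zeta) (zeta #>\<^bsub>G\<^esub> y) (zeta #>\<^bsub>G\<^esub> a) = zeta"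
      using central coset_mem[OF y] unfolding star_center_def bzero_def quot_brace_def by auto
    then show "a \<star> y \<in> zeta" "y \<star> a \<in> zeta" using star_quot_brace a y coset_trivial by auto
  qed
qed

section \<open>Ideals and cyclic subgroups\<close>

lemma ideal_inI:
  assumes J: "subbrace A J" and I: "subgroup I G" "I \<subseteq> J"
    and closed: "\<And>j i. j \<in> J \<Longrightarrow> i \<in> I \<Longrightarrow> j \<star> i \<in> I \<and> i \<star> j \<in> I"
  shows "ideal_in A J I"
proof -
  have JG: "subgroup J G" and JM: "subgroup J M" using J unfolding subbrace_def by auto
  have IC: "I \<subseteq> carrier G" using I subgroup.subset by blast
  have "subgroup I M"
  proof (rule M.subgroupI)
    show "I \<subseteq> carrier M" using IC by simp
    show "I \<noteq> {}" using subgroup.one_closed[OF I(1)] by blast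
  next
    fix a b assume a: "a \<in> I" and b: "b \<in> I"
    then have "a \<star> b \<in> I" using closed I(2) by blast
    then show "a \<cdot>\<^sub>A b \<in> I"
      using mult_eq_star_add a b IC subgroup.m_closed[OF I(1)] by (metis subsetD)
  next
    fix a assume a: "a \<in> I"
    have ac: "a \<in> carrier G" using a IC by auto
    define b where "b = inv\<^bsub>M\<^esub> a"
    have b: "b \<in> J" "b \<in> carrier G"
      unfolding b_def using subgroup.m_inv_closed[OF JM] a I(2) subgroup.subset[OF JG] by auto
    have ab: "a \<star> b \<in> I" "a \<star> b \<in> carrier G" using closed[OF b(1) a] IC by auto
    have "0\<^sub>A = a \<star> b +\<^sub>A (a +\<^sub>A b)"
      using mult_eq_star_add[OF ac b(2)] M.r_inv[of a] ac unfolding b_def by simp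
    then have "b +\<^sub>A (a \<star> b +\<^sub>A a) = 0\<^sub>A" using ac b ab by (simp add: G.m_ac)
    then have "b = -\<^sub>A (a \<star> b +\<^sub>A a)" using G.inv_equality[of b] ac b ab by simp
    then have "b \<in> I" using subgroup.m_inv_closed[OF I(1) subgroup.m_closed[OF I(1) ab(1) a]] by simp
    then show "inv\<^bsub>M\<^esub> a \<in> I" unfolding b_def .
  qed
  then show ?thesis unfolding ideal_in_def subbrace_def using JG JM I closed by blast
qed

lemma brace_idealI:
  assumes J: "subgroup J G"
    and closed: "\<And>y j. y \<in> carrier G \<Longrightarrow> j \<in> J \<Longrightarrow> y \<star> j \<in> J \<and> j \<star> y \<in> J"
  shows "brace_ideal A J"
  unfolding brace_ideal_def bcarrier_def
proof (rule ideal_inI)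
  show "subbrace A (carrier G)" unfolding subbrace_def using G.subgroup_self M.subgroup_self by simp
qed (use J closed subgroup.subset[OF J] in auto)

definition adjoin :: "'a set \<Rightarrow> 'a \<Rightarrow> 'a set" where
  "adjoin H x = {h +\<^sub>A n \<times>\<^sub>A x | h n. h \<in> H}"

lemma subgroup_adjoin: "subgroup H G \<Longrightarrow> x \<in> carrier G \<Longrightarrow> subgroup (adjoin H x) G"
  unfolding adjoin_def by (rule G.subgroup_adjoin)

lemma subset_adjoin: "subgroup H G \<Longrightarrow> H \<subseteq> adjoin H x"
proof
  fix h assume "subgroup H G" "h \<in> H"
  then have "h = h +\<^sub>A 0 \<times>\<^sub>A x" using subgroup.mem_carrier by fastforce
  then show "h \<in> adjoin H x" unfolding adjoin_def using \<open>h \<in> H\<close> by blast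
qed

lemma self_in_adjoin: "subgroup H G \<Longrightarrow> x \<in> carrier G \<Longrightarrow> x \<in> adjoin H x"
proof -
  assume "subgroup H G" "x \<in> carrier G"
  then have "x = 0\<^sub>A +\<^sub>A 1 \<times>\<^sub>A x" "0\<^sub>A \<in> H" using subgroup.one_closed by auto
  then show "x \<in> adjoin H x" unfolding adjoin_def by blast
qed

lemma adjoin_zeta_subset_zeta2: "x \<in> zeta2 \<Longrightarrow> adjoin zeta x \<subseteq> zeta2"
  unfolding adjoin_def using zeta_subset_zeta2 subgroup_zeta2
  by (auto intro: subgroup.m_closed G.subgroup_int_pow_closed)

lemma brace_ideal_adjoin_zeta: "x \<in> zeta2 \<Longrightarrow> brace_ideal A (adjoin zeta x)"
proof (rule brace_idealI)
  assume x: "x \<in> zeta2"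
  then show "subgroup (adjoin zeta x) G" using subgroup_adjoin subgroup_zeta zeta2_subset by blast
  fix y j assume "y \<in> carrier G" "j \<in> adjoin zeta x"
  then have "y \<star> j \<in> zeta" "j \<star> y \<in> zeta"
    using adjoin_zeta_subset_zeta2[OF x] star_zeta2_left star_zeta2_right by auto
  then show "y \<star> j \<in> adjoin zeta x \<and> j \<star> y \<in> adjoin zeta x"
    using subset_adjoin[OF subgroup_zeta] by blast
qed

lemma mem_add_cyclic_iff: "u \<in> carrier G \<Longrightarrow> t \<in> add_cyclic A u \<longleftrightarrow> (\<exists>k. t = k \<times>\<^sub>A u)"
  unfolding add_cyclic_def using G.generate_pow[of u] by auto

lemma subgroup_add_cyclic: "u \<in> carrier G \<Longrightarrow> subgroup (add_cyclic A u) G"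
  unfolding add_cyclic_def using G.generate_is_subgroup by simp

lemma add_cyclic_subset: "u \<in> carrier G \<Longrightarrow> add_cyclic A u \<subseteq> carrier G"
  using subgroup.subset[OF subgroup_add_cyclic] .

lemma self_in_add_cyclic: "u \<in> carrier G \<Longrightarrow> u \<in> add_cyclic A u"
  using mem_add_cyclic_iff[of u u] G.int_pow_1 by metis

lemma add_cyclic_subset_zeta: "u \<in> zeta \<Longrightarrow> add_cyclic A u \<subseteq> zeta"
  unfolding add_cyclic_def using G.generate_subgroup_incl[OF _ subgroup_zeta] by simp

section \<open>Stars of elements of the second star centre\<close>

definition stars :: "'a \<Rightarrow> 'a set" where
  "stars x = {y \<star> x | y. y \<in> carrier G} \<union> {x \<star> y | y. y \<in> carrier G}"

lemma stars_subset_zeta: "x \<in> zeta2 \<Longrightarrow> stars x \<subseteq> zeta"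
  unfolding stars_def using star_zeta2_left star_zeta2_right by auto

lemma int_mult_star_eq_zero:
  assumes x: "x \<in> zeta2" and s: "s \<in> stars x" and nx: "n \<times>\<^sub>A x \<in> zeta"
  shows "n \<times>\<^sub>A s = 0\<^sub>A"
proof -
  have xc: "x \<in> carrier G" using x zeta2_subset by blast
  obtain y where y: "y \<in> carrier G" and "s = y \<star> x \<or> s = x \<star> y" using s unfolding stars_def by blast
  then consider "n \<times>\<^sub>A s = y \<star> (n \<times>\<^sub>A x)" | "n \<times>\<^sub>A s = (n \<times>\<^sub>A x) \<star> y"
    using star_int_mult_right[OF y xc] star_int_mult_left[OF x y] by metis
  then show ?thesis using nx y by cases simp_all
qed

lemma star_adjoin_zeta_self:
  assumes x: "x \<in> zeta2" and j: "j \<in> adjoin zeta x"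
  shows "j \<star> x \<in> add_cyclic A (x \<star> x)" "x \<star> j \<in> add_cyclic A (x \<star> x)"
proof -
  obtain z n where z: "z \<in> zeta" and j_eq: "j = z +\<^sub>A n \<times>\<^sub>A x" using j unfolding adjoin_def by blast
  have xc: "x \<in> carrier G" using x zeta2_subset by blast
  have zc: "z \<in> zeta2" "z \<in> carrier G" using z zeta_subset_zeta2 zeta_subset by auto
  have xn: "n \<times>\<^sub>A x \<in> zeta2" using G.subgroup_int_pow_closed[OF subgroup_zeta2 x] .
  have "j \<star> x = n \<times>\<^sub>A (x \<star> x)"
    using star_add_left[OF zc(1) xn xc] star_int_mult_left[OF x xc] z xc j_eq by simp
  moreover have "x \<star> j = n \<times>\<^sub>A (x \<star> x)"
    using star_add_right[OF xc zc(2)] star_int_mult_right[OF xc xc] z xc j_eq by simp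
  ultimately show "j \<star> x \<in> add_cyclic A (x \<star> x)" "x \<star> j \<in> add_cyclic A (x \<star> x)"
    using mem_add_cyclic_iff xc by auto
qed

lemma int_mult_in_zeta_if_in_adjoin:
  assumes x: "x \<in> zeta2" and w: "w \<in> zeta" and s: "s \<in> zeta"
    and h: "h \<in> add_cyclic A (x \<star> x)" and s_eq: "s = h +\<^sub>A n \<times>\<^sub>A (x +\<^sub>A w)"
  shows "n \<times>\<^sub>A x \<in> zeta"
proof -
  have xc: "x \<in> carrier G" and wc: "w \<in> carrier G" using x w zeta2_subset zeta_subset by auto
  have hZ: "h \<in> zeta" using h add_cyclic_subset_zeta star_zeta2_left[OF x xc] by blast
  then have "n \<times>\<^sub>A x +\<^sub>A n \<times>\<^sub>A w \<in> zeta"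
    using zeta_add_cancel_left[OF hZ] s s_eq xc wc by (simp add: G.int_pow_distrib)
  then show ?thesis
    using zeta_add_cancel_right G.subgroup_int_pow_closed[OF subgroup_zeta w] xc by blast
qed

text \<open>Multiplying by \<open>n\<close> kills both \<open>s\<close> and \<open>h\<close>, since \<open>n x\<close> is central.\<close>
lemma square_coeff_mult_eq_zero:
  assumes x: "x \<in> zeta2" and w: "w \<in> zeta" and s: "s \<in> stars x"
    and h: "h \<in> add_cyclic A (x \<star> x)" and s_eq: "s = h +\<^sub>A n \<times>\<^sub>A (x +\<^sub>A w)"
  shows "(n * n) \<times>\<^sub>A (x +\<^sub>A w) = 0\<^sub>A"
proof -
  have xc: "x \<in> carrier G" and wc: "w \<in> carrier G" using x w zeta2_subset zeta_subset by auto
  have d: "x \<star> x \<in> carrier G" using xc by simp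
  have nx: "n \<times>\<^sub>A x \<in> zeta"
    using int_mult_in_zeta_if_in_adjoin[OF x w _ h s_eq] stars_subset_zeta[OF x] s by blast
  have "n \<times>\<^sub>A (x \<star> x) = 0\<^sub>A" using star_int_mult_right[OF xc xc, of n] nx xc by simp
  moreover obtain m where m: "h = m \<times>\<^sub>A (x \<star> x)" using h mem_add_cyclic_iff d by blast
  moreover have "n \<times>\<^sub>A h = m \<times>\<^sub>A (n \<times>\<^sub>A (x \<star> x))" using m d by (simp add: G.int_pow_pow mult.commute)
  ultimately have nh: "n \<times>\<^sub>A h = 0\<^sub>A" by simp
  have "n \<times>\<^sub>A s = 0\<^sub>A" using int_mult_star_eq_zero[OF x s nx] .
  then show ?thesis
    using s_eq nh m xc wc d by (simp add: G.int_pow_distrib G.int_pow_pow mult.commute)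
qed

lemma ideal_in_adjoin_zeta:
  assumes x: "x \<in> zeta2" and w: "w \<in> zeta"
  shows "ideal_in A (adjoin zeta x) (adjoin (add_cyclic A (x \<star> x)) (x +\<^sub>A w))"
proof (rule ideal_inI)
  let ?D = "add_cyclic A (x \<star> x)" and ?I = "adjoin (add_cyclic A (x \<star> x)) (x +\<^sub>A w)"
  have xc: "x \<in> carrier G" and wc: "w \<in> carrier G" using x w zeta2_subset zeta_subset by auto
  have xw: "x +\<^sub>A w \<in> zeta2" "x +\<^sub>A w \<in> carrier G"
    using subgroup.m_closed[OF subgroup_zeta2 x] w zeta_subset_zeta2 xc wc by auto
  have D: "subgroup ?D G" "?D \<subseteq> zeta"
    using subgroup_add_cyclic add_cyclic_subset_zeta star_zeta2_left[OF x xc] xc by auto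
  show "subbrace A (adjoin zeta x)"
    using brace_ideal_adjoin_zeta[OF x] unfolding brace_ideal_def ideal_in_def by blast
  show "subgroup ?I G" using subgroup_adjoin[OF D(1) xw(2)] .
  show "?I \<subseteq> adjoin zeta x"
  proof
    fix i assume "i \<in> ?I"
    then obtain h n where h: "h \<in> ?D" and i: "i = h +\<^sub>A n \<times>\<^sub>A (x +\<^sub>A w)" unfolding adjoin_def by blast
    have "h \<in> carrier G" using h D zeta_subset by blast
    then have "i = (h +\<^sub>A n \<times>\<^sub>A w) +\<^sub>A n \<times>\<^sub>A x" using i xc wc by (simp add: G.int_pow_distrib G.m_ac)
    moreover have "h +\<^sub>A n \<times>\<^sub>A w \<in> zeta"
      using h D subgroup.m_closed[OF subgroup_zeta] G.subgroup_int_pow_closed[OF subgroup_zeta w] by blast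
    ultimately show "i \<in> adjoin zeta x" unfolding adjoin_def by blast
  qed
  fix j i assume j: "j \<in> adjoin zeta x" and "i \<in> ?I"
  then obtain h n where h: "h \<in> ?D" and i: "i = h +\<^sub>A n \<times>\<^sub>A (x +\<^sub>A w)" unfolding adjoin_def by blast
  have hZ: "h \<in> zeta" "h \<in> zeta2" using h D zeta_subset_zeta2 by auto
  have jZ: "j \<in> zeta2" "j \<in> carrier G" using j adjoin_zeta_subset_zeta2[OF x] zeta2_subset by auto
  have "j \<star> i = n \<times>\<^sub>A (j \<star> x)"
    using i hZ jZ xc wc w star_add_right star_int_mult_right by (simp add: zeta_subset[THEN subsetD])
  moreover have "i \<star> j = n \<times>\<^sub>A (x \<star> j)"
  proof -
    have "(x +\<^sub>A w) \<star> j = x \<star> j" using star_add_left[OF x _ jZ(2)] w zeta_subset_zeta2 jZ xc by auto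
    then show ?thesis using i hZ jZ xc star_add_left star_int_mult_left[OF xw(1)]
        G.subgroup_int_pow_closed[OF subgroup_zeta2 xw(1)] by auto
  qed
  ultimately have "j \<star> i \<in> ?D" "i \<star> j \<in> ?D"
    using star_adjoin_zeta_self[OF x j] G.subgroup_int_pow_closed[OF D(1)] by auto
  then show "j \<star> i \<in> ?I \<and> i \<star> j \<in> ?I" using subset_adjoin[OF D(1)] by blast
qed

definition aperiodic :: "'a \<Rightarrow> bool" where
  "aperiodic x \<longleftrightarrow> x \<in> zeta2 \<and> (\<forall>n. n \<times>\<^sub>A x \<in> zeta \<longrightarrow> n = 0)"

lemma star_square_add_int_mult:
  assumes x: "x \<in> zeta2" and y: "y \<in> zeta2"
  shows "(x +\<^sub>A k \<times>\<^sub>A y) \<star> (x +\<^sub>A k \<times>\<^sub>A y) =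
    x \<star> x +\<^sub>A k \<times>\<^sub>A (x \<star> y +\<^sub>A y \<star> x) +\<^sub>A (k * k) \<times>\<^sub>A (y \<star> y)"
proof -
  have xc: "x \<in> carrier G" and yc: "y \<in> carrier G" using x y zeta2_subset by auto
  have ky: "k \<times>\<^sub>A y \<in> zeta2" "k \<times>\<^sub>A y \<in> carrier G"
    using G.subgroup_int_pow_closed[OF subgroup_zeta2 y] yc by auto
  have "(x +\<^sub>A k \<times>\<^sub>A y) \<star> (x +\<^sub>A k \<times>\<^sub>A y) =
      (x \<star> x +\<^sub>A x \<star> (k \<times>\<^sub>A y)) +\<^sub>A ((k \<times>\<^sub>A y) \<star> x +\<^sub>A (k \<times>\<^sub>A y) \<star> (k \<times>\<^sub>A y))"
    using star_add_left[OF x ky(1)] star_add_right xc ky by (simp add: G.m_ac)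
  also have "\<dots> = (x \<star> x +\<^sub>A k \<times>\<^sub>A (x \<star> y)) +\<^sub>A (k \<times>\<^sub>A (y \<star> x) +\<^sub>A (k * k) \<times>\<^sub>A (y \<star> y))"
    using star_int_mult_right star_int_mult_left[OF y] xc yc ky by (simp add: G.int_pow_pow)
  finally show ?thesis using xc yc by (simp add: G.int_pow_distrib G.m_ac)
qed

lemma aperiodic_int_mult:
  assumes x: "aperiodic x" and k: "k \<noteq> 0"
  shows "aperiodic (k \<times>\<^sub>A x)"
  unfolding aperiodic_def
proof (intro conjI allI impI)
  have xZ: "x \<in> zeta2" using x unfolding aperiodic_def by blast
  then show "k \<times>\<^sub>A x \<in> zeta2" using G.subgroup_int_pow_closed[OF subgroup_zeta2] by blast
  fix n assume "n \<times>\<^sub>A (k \<times>\<^sub>A x) \<in> zeta"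
  then have "(k * n) \<times>\<^sub>A x \<in> zeta" using xZ zeta2_subset by (auto simp: G.int_pow_pow)
  then show "n = 0" using x k unfolding aperiodic_def by auto
qed

lemma aperiodic_add_int_mult:
  assumes a: "a \<in> zeta2" and m: "m \<noteq> 0" "m \<times>\<^sub>A a \<in> zeta" and c: "aperiodic c" and k: "k \<noteq> 0"
  shows "aperiodic (a +\<^sub>A k \<times>\<^sub>A c)"
  unfolding aperiodic_def
proof (intro conjI allI impI)
  have cZ: "c \<in> zeta2" using c unfolding aperiodic_def by blast
  have ac: "a \<in> carrier G" and cc: "c \<in> carrier G" using a cZ zeta2_subset by auto
  show "a +\<^sub>A k \<times>\<^sub>A c \<in> zeta2"
    using subgroup.m_closed[OF subgroup_zeta2 a G.subgroup_int_pow_closed[OF subgroup_zeta2 cZ]] .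
  fix n assume n: "n \<times>\<^sub>A (a +\<^sub>A k \<times>\<^sub>A c) \<in> zeta"
  have "(n * m) \<times>\<^sub>A (a +\<^sub>A k \<times>\<^sub>A c) \<in> zeta"
    using G.subgroup_int_pow_closed[OF subgroup_zeta n, of m] ac cc by (simp add: G.int_pow_pow)
  moreover have "(n * m) \<times>\<^sub>A (a +\<^sub>A k \<times>\<^sub>A c) = n \<times>\<^sub>A (m \<times>\<^sub>A a) +\<^sub>A (k * (n * m)) \<times>\<^sub>A c"
    using ac cc by (simp add: G.int_pow_distrib G.int_pow_pow mult.commute mult.left_commute)
  moreover have "n \<times>\<^sub>A (m \<times>\<^sub>A a) \<in> zeta" using G.subgroup_int_pow_closed[OF subgroup_zeta m(2)] .
  ultimately have "(k * (n * m)) \<times>\<^sub>A c \<in> zeta"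
    using zeta_add_cancel_left[of "n \<times>\<^sub>A (m \<times>\<^sub>A a)" "(k * (n * m)) \<times>\<^sub>A c"] cc by simp
  then show "n = 0" using c k m unfolding aperiodic_def by auto
qed

lemma aperiodic_add_or_add_int_mult:
  assumes x: "aperiodic x" and y: "aperiodic y" and k: "k \<noteq> 0"
  shows "aperiodic (x +\<^sub>A y) \<or> aperiodic (x +\<^sub>A (k + 1) \<times>\<^sub>A y)"
proof (cases "aperiodic (x +\<^sub>A y)")
  case False
  have xZ: "x \<in> zeta2" and yZ: "y \<in> zeta2" using x y unfolding aperiodic_def by auto
  then have xc: "x \<in> carrier G" and yc: "y \<in> carrier G" using zeta2_subset by auto
  have xy: "x +\<^sub>A y \<in> zeta2" using subgroup.m_closed[OF subgroup_zeta2 xZ yZ] .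
  then obtain m where "m \<noteq> 0" "m \<times>\<^sub>A (x +\<^sub>A y) \<in> zeta"
    using False unfolding aperiodic_def by blast
  then have "aperiodic (x +\<^sub>A y +\<^sub>A k \<times>\<^sub>A y)" using aperiodic_add_int_mult[OF xy _ _ y k] by blast
  moreover have "x +\<^sub>A y +\<^sub>A k \<times>\<^sub>A y = x +\<^sub>A (k + 1) \<times>\<^sub>A y"
    using xc yc by (simp add: G.int_pow_mult G.m_assoc G.m_comm)
  ultimately show ?thesis by simp
qed simp

text \<open>If \<open>a\<close> is not aperiodic, \<open>e = a + c\<close> and \<open>f = a + 2c\<close> are, and expanding their squares
  gives \<open>a \<star> a = 2 (e \<star> e) - f \<star> f + 2 (c \<star> c)\<close>.\<close>
lemma square_mem_if_aperiodic_squares_mem: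
  assumes c: "aperiodic c" and a: "a \<in> zeta2" and H: "subgroup H G"
    and squares: "\<And>g. aperiodic g \<Longrightarrow> g \<star> g \<in> H"
  shows "a \<star> a \<in> H"
proof (cases "aperiodic a")
  case True
  then show ?thesis using squares by blast
next
  case False
  then obtain m where m: "m \<noteq> 0" "m \<times>\<^sub>A a \<in> zeta" using a unfolding aperiodic_def by blast
  have cZ: "c \<in> zeta2" using c unfolding aperiodic_def by blast
  have ac: "a \<in> carrier G" and cc: "c \<in> carrier G" using a cZ zeta2_subset by auto
  define e where "e = a +\<^sub>A 1 \<times>\<^sub>A c"
  define f where "f = a +\<^sub>A 2 \<times>\<^sub>A c"
  have ef: "e \<star> e \<in> H" "f \<star> f \<in> H" "c \<star> c \<in> H"
    unfolding e_def f_def using aperiodic_add_int_mult[OF a m c] squares c by auto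
  define \<mu> where "\<mu> = a \<star> c +\<^sub>A c \<star> a"
  have \<mu>: "\<mu> \<in> carrier G" unfolding \<mu>_def using ac cc by simp
  have "a \<star> a +\<^sub>A f \<star> f = a \<star> a +\<^sub>A (a \<star> a +\<^sub>A (\<mu> +\<^sub>A \<mu>) +\<^sub>A (c \<star> c +\<^sub>A c \<star> c +\<^sub>A (c \<star> c +\<^sub>A c \<star> c)))"
    using star_square_add_int_mult[OF a cZ, of 2] ac cc \<mu>
    unfolding f_def \<mu>_def by (simp add: G.int_pow_mult[of _ 1 1, simplified] G.int_pow_mult[of _ 2 2, simplified])
  also have "\<dots> = 2 \<times>\<^sub>A (e \<star> e) +\<^sub>A 2 \<times>\<^sub>A (c \<star> c)"
    using star_square_add_int_mult[OF a cZ, of 1] ac cc \<mu> unfolding e_def \<mu>_def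
    by (simp add: G.int_pow_mult[of _ 1 1, simplified] G.m_ac)
  finally have "a \<star> a = 2 \<times>\<^sub>A (e \<star> e) +\<^sub>A 2 \<times>\<^sub>A (c \<star> c) +\<^sub>A -\<^sub>A (f \<star> f)"
    using G.inv_solve_right ac cc unfolding e_def f_def by simp
  then show ?thesis
    using ef H by (simp add: subgroup.m_closed subgroup.m_inv_closed G.subgroup_int_pow_closed)
qed

end

locale left_T_brace = left_brace +
  assumes T_brace: "T_brace A"
begin

text \<open>By the T-property the ideal of \<open>\<zeta> + \<langle>x\<rangle>\<close> given by \<open>ideal_in_adjoin_zeta\<close> is an
  ideal of \<open>A\<close>; it contains \<open>x + w\<close>, whose stars are those of \<open>x\<close>.\<close>
lemma stars_subset_adjoin:
  assumes x: "x \<in> zeta2" and w: "w \<in> zeta"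
  shows "stars x \<subseteq> adjoin (add_cyclic A (x \<star> x)) (x +\<^sub>A w)"
proof -
  let ?I = "adjoin (add_cyclic A (x \<star> x)) (x +\<^sub>A w)"
  have xc: "x \<in> carrier G" and wc: "w \<in> carrier G" using x w zeta2_subset zeta_subset by auto
  have ideal: "brace_ideal A ?I"
    using T_brace brace_ideal_adjoin_zeta[OF x] ideal_in_adjoin_zeta[OF x w] unfolding T_brace_def by blast
  have "x +\<^sub>A w \<in> ?I"
    using self_in_adjoin[OF subgroup_add_cyclic] xc wc by simp
  then have "y \<star> (x +\<^sub>A w) \<in> ?I" "(x +\<^sub>A w) \<star> y \<in> ?I" if "y \<in> carrier G" for y
    using ideal that unfolding brace_ideal_def ideal_in_def bcarrier_def by auto
  moreover have "y \<star> (x +\<^sub>A w) = y \<star> x" "(x +\<^sub>A w) \<star> y = x \<star> y" if "y \<in> carrier G" for y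
    using star_add_right[OF that xc wc] star_add_left[OF x _ that] w that xc zeta_subset_zeta2 by auto
  ultimately show ?thesis unfolding stars_def by auto
qed

lemma stars_subset_add_cyclic_if_aperiodic:
  assumes x: "aperiodic x"
  shows "stars x \<subseteq> add_cyclic A (x \<star> x)"
proof
  fix s assume s: "s \<in> stars x"
  have xZ: "x \<in> zeta2" and xc: "x \<in> carrier G" using x zeta2_subset unfolding aperiodic_def by auto
  have zero: "0\<^sub>A \<in> zeta" using subgroup.one_closed[OF subgroup_zeta] .
  obtain h n where h: "h \<in> add_cyclic A (x \<star> x)" and s_eq: "s = h +\<^sub>A n \<times>\<^sub>A (x +\<^sub>A 0\<^sub>A)"
    using stars_subset_adjoin[OF xZ zero] s unfolding adjoin_def by blast
  have "n \<times>\<^sub>A x \<in> zeta"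
    using int_mult_in_zeta_if_in_adjoin[OF xZ zero _ h s_eq] stars_subset_zeta[OF xZ] s by blast
  then have "n = 0" using x unfolding aperiodic_def by blast
  moreover have "h \<in> carrier G" using h add_cyclic_subset[of "x \<star> x"] xc by auto
  ultimately show "s \<in> add_cyclic A (x \<star> x)" using s_eq h by simp
qed

lemma stars_subset_add_cyclic_if_zeta_aperiodic:
  assumes v: "v \<in> zeta" and v_inf: "\<And>k. k \<times>\<^sub>A v = 0\<^sub>A \<Longrightarrow> k = 0" and x: "x \<in> zeta2"
  shows "stars x \<subseteq> add_cyclic A (x \<star> x)"
proof
  fix s assume s: "s \<in> stars x"
  have xc: "x \<in> carrier G" and vc: "v \<in> carrier G" using x v zeta2_subset zeta_subset by auto
  have zero: "0\<^sub>A \<in> zeta" using subgroup.one_closed[OF subgroup_zeta] .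
  obtain h n where h: "h \<in> add_cyclic A (x \<star> x)" and s_eq: "s = h +\<^sub>A n \<times>\<^sub>A (x +\<^sub>A 0\<^sub>A)"
    using stars_subset_adjoin[OF x zero] s unfolding adjoin_def by blast
  obtain h' n' where h': "h' \<in> add_cyclic A (x \<star> x)" and s_eq': "s = h' +\<^sub>A n' \<times>\<^sub>A (x +\<^sub>A v)"
    using stars_subset_adjoin[OF x v] s unfolding adjoin_def by blast
  define K where "K = (n * n) * (n' * n')"
  have "K \<times>\<^sub>A x = (n' * n') \<times>\<^sub>A ((n * n) \<times>\<^sub>A (x +\<^sub>A 0\<^sub>A))"
    unfolding K_def using xc by (simp add: G.int_pow_pow)
  then have Kx: "K \<times>\<^sub>A x = 0\<^sub>A" using square_coeff_mult_eq_zero[OF x zero s h s_eq] by simp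
  have "K = (n' * n') * (n * n)" unfolding K_def by (rule mult.commute)
  then have "K \<times>\<^sub>A (x +\<^sub>A v) = (n * n) \<times>\<^sub>A ((n' * n') \<times>\<^sub>A (x +\<^sub>A v))"
    using xc vc by (simp add: G.int_pow_pow)
  then have "K \<times>\<^sub>A x +\<^sub>A K \<times>\<^sub>A v = 0\<^sub>A"
    using square_coeff_mult_eq_zero[OF x v s h' s_eq'] xc vc by (simp add: G.int_pow_distrib)
  then have "K \<times>\<^sub>A v = 0\<^sub>A" using Kx vc by simp
  then have "K = 0" using v_inf by blast
  then have "n = 0 \<or> n' = 0" unfolding K_def by simp
  moreover have "h \<in> carrier G" "h' \<in> carrier G" using h h' add_cyclic_subset[of "x \<star> x"] xc by auto
  ultimately have "s = h \<or> s = h'" using s_eq s_eq' by (metis int_pow_0 G.r_one)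
  then show "s \<in> add_cyclic A (x \<star> x)" using h h' by blast
qed

end

section \<open>Squares when the torsion of \<zeta> is a p-group\<close>

locale left_brace_p_torsion = left_brace +
  fixes p :: nat
  assumes prime_p: "Factorial_Ring.prime p"
    and zeta_p_torsion: "\<forall>z\<in>star_center A. add_ord A z \<noteq> 0 \<longrightarrow> (\<exists>k. add_ord A z = p ^ k)"
begin

text \<open>Since \<open>x \<star> (p x) = p (x \<star> x)\<close> and \<open>(p x) \<star> (p x) = p\<^sup>2 (x \<star> x)\<close>, the hypothesis
  gives \<open>p (x \<star> x) = j p\<^sup>2 (x \<star> x)\<close>, so the order of \<open>x \<star> x\<close>, a power of \<open>p\<close> or infinite,
  divides \<open>p\<^sup>2 j - p\<close>.\<close>
lemma square_p_torsion:
  assumes x: "x \<in> zeta2"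
    and good: "stars (int p \<times>\<^sub>A x) \<subseteq> add_cyclic A ((int p \<times>\<^sub>A x) \<star> (int p \<times>\<^sub>A x))"
  shows "int p \<times>\<^sub>A (x \<star> x) = 0\<^sub>A"
proof -
  have xc: "x \<in> carrier G" using x zeta2_subset by blast
  define d where "d = x \<star> x"
  have d: "d \<in> zeta" "d \<in> carrier G" unfolding d_def using star_zeta2_left[OF x xc] xc by auto
  have xpx: "x \<star> (int p \<times>\<^sub>A x) = int p \<times>\<^sub>A d" unfolding d_def using star_int_mult_right[OF xc xc] .
  have "(int p \<times>\<^sub>A x) \<star> (int p \<times>\<^sub>A x) = int p \<times>\<^sub>A (int p \<times>\<^sub>A d)"
    using star_int_mult_left[OF x] xc xpx by simp
  moreover have "x \<star> (int p \<times>\<^sub>A x) \<in> stars (int p \<times>\<^sub>A x)" unfolding stars_def using xc by blast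
  ultimately have "int p \<times>\<^sub>A d \<in> add_cyclic A (int p \<times>\<^sub>A (int p \<times>\<^sub>A d))" using good xpx by auto
  then obtain j where "int p \<times>\<^sub>A d = j \<times>\<^sub>A (int p \<times>\<^sub>A (int p \<times>\<^sub>A d))"
    using mem_add_cyclic_iff d by auto
  then have "int p \<times>\<^sub>A d = (int p * int p * j) \<times>\<^sub>A d" using d by (simp add: G.int_pow_pow)
  then have "int (G.ord d) dvd int p * int p * j - int p" using G.int_pow_eq[OF d(2)] by blast
  then have "G.ord d dvd p"
    using prime_power_dvd_prime[OF prime_p] zeta_p_torsion d unfolding add_ord_def by blast
  then show ?thesis using G.int_pow_eq_id[OF d(2)] unfolding d_def by simp
qed

lemma add_cyclic_eq_if_p_torsion:
  assumes d: "d \<in> carrier G" "int p \<times>\<^sub>A d = 0\<^sub>A" and u: "u \<in> add_cyclic A d" "u \<noteq> 0\<^sub>A"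
  shows "add_cyclic A u = add_cyclic A d"
  using G.generate_eq_if_pow_prime_eq_one[OF prime_p d] u unfolding add_cyclic_def by blast

text \<open>Either some nonzero star of \<open>x\<close> and \<open>y\<close> lies in both cyclic groups of order \<open>p\<close>, or
  \<open>x \<star> y = y \<star> x = 0\<close> and then \<open>x \<star> z = x \<star> x\<close>, \<open>y \<star> z = y \<star> y\<close> for the element
  \<open>z = x + k y\<close> of \<open>W\<close> with \<open>k \<equiv> 1 (mod p)\<close>.\<close>
lemma add_cyclic_square_eq_on:
  assumes W: "W \<subseteq> zeta2"
    and good: "\<And>u. u \<in> W \<Longrightarrow> stars u \<subseteq> add_cyclic A (u \<star> u)"
    and mult_p: "\<And>u. u \<in> W \<Longrightarrow> int p \<times>\<^sub>A u \<in> W"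
    and pair: "\<And>u v. u \<in> W \<Longrightarrow> v \<in> W \<Longrightarrow> u +\<^sub>A v \<in> W \<or> u +\<^sub>A (int p + 1) \<times>\<^sub>A v \<in> W"
    and x: "x \<in> W" "x \<star> x \<noteq> 0\<^sub>A" and y: "y \<in> W" "y \<star> y \<noteq> 0\<^sub>A"
  shows "add_cyclic A (x \<star> x) = add_cyclic A (y \<star> y)"
proof -
  have torsion: "int p \<times>\<^sub>A (u \<star> u) = 0\<^sub>A" if "u \<in> W" for u
    using square_p_torsion good mult_p W that by blast
  have xc: "x \<in> carrier G" and yc: "y \<in> carrier G" using x y W zeta2_subset by auto
  have sq: "x \<star> x \<in> carrier G" "y \<star> y \<in> carrier G" using xc yc by auto
  show ?thesis
  proof (cases "\<exists>s \<in> stars x \<inter> stars y. s \<noteq> 0\<^sub>A")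
    case True
    then obtain s where "s \<in> stars x" "s \<in> stars y" "s \<noteq> 0\<^sub>A" by blast
    then show ?thesis
      using add_cyclic_eq_if_p_torsion[OF sq(1) torsion] add_cyclic_eq_if_p_torsion[OF sq(2) torsion]
        good x y by (metis subsetD)
  next
    case False
    have "x \<star> y \<in> stars x \<inter> stars y" "y \<star> x \<in> stars x \<inter> stars y"
      unfolding stars_def using xc yc by blast+
    then have xy: "x \<star> y = 0\<^sub>A" "y \<star> x = 0\<^sub>A" using False by blast+
    obtain k where k: "k \<times>\<^sub>A (y \<star> y) = y \<star> y" and z: "x +\<^sub>A k \<times>\<^sub>A y \<in> W"
    proof -
      have "(int p + 1) \<times>\<^sub>A (y \<star> y) = y \<star> y" using torsion[OF y(1)] sq by (simp add: G.int_pow_mult)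
      then show thesis using pair[OF x(1) y(1)] that[of 1] that[of "int p + 1"] yc sq by auto
    qed
    define z where "z = x +\<^sub>A k \<times>\<^sub>A y"
    have "x \<star> z = x \<star> x" unfolding z_def using star_add_right star_int_mult_right xy xc yc by simp
    moreover have "y \<star> z = y \<star> y" unfolding z_def using star_add_right star_int_mult_right xy xc yc k by simp
    moreover have zc: "z \<in> carrier G" unfolding z_def using xc yc by simp
    ultimately have "x \<star> x \<in> stars z" "y \<star> y \<in> stars z" unfolding stars_def using xc yc by force+
    moreover have zW: "z \<in> W" unfolding z_def using z .
    ultimately have "x \<star> x \<in> add_cyclic A (z \<star> z)" "y \<star> y \<in> add_cyclic A (z \<star> z)"
      using good by blast+
    then show ?thesis
      using add_cyclic_eq_if_p_torsion[OF _ torsion[OF zW]] x(2) y(2) zc by simp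
  qed
qed

end

locale T_brace_p_torsion = left_T_brace + left_brace_p_torsion
begin

lemma add_cyclic_square_eq_if_zeta_aperiodic:
  assumes v: "v \<in> zeta" and v_inf: "\<And>k. k \<times>\<^sub>A v = 0\<^sub>A \<Longrightarrow> k = 0"
    and a: "a \<in> zeta2" "a \<star> a \<noteq> 0\<^sub>A" and b: "b \<in> zeta2" "b \<star> b \<noteq> 0\<^sub>A"
  shows "add_cyclic A (a \<star> a) = add_cyclic A (b \<star> b)"
proof (rule add_cyclic_square_eq_on[OF order.refl _ _ _ a b])
  show "stars u \<subseteq> add_cyclic A (u \<star> u)" if "u \<in> zeta2" for u
    using stars_subset_add_cyclic_if_zeta_aperiodic[OF v v_inf that] by blast
  show "int p \<times>\<^sub>A u \<in> zeta2" if "u \<in> zeta2" for u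
    using G.subgroup_int_pow_closed[OF subgroup_zeta2 that] .
  show "u +\<^sub>A w \<in> zeta2 \<or> u +\<^sub>A (int p + 1) \<times>\<^sub>A w \<in> zeta2" if "u \<in> zeta2" "w \<in> zeta2" for u w
    using subgroup.m_closed[OF subgroup_zeta2 that] by blast
qed

lemma add_cyclic_square_eq_if_aperiodic:
  assumes c: "aperiodic c"
    and a: "a \<in> zeta2" "a \<star> a \<noteq> 0\<^sub>A" and b: "b \<in> zeta2" "b \<star> b \<noteq> 0\<^sub>A"
  shows "add_cyclic A (a \<star> a) = add_cyclic A (b \<star> b)"
proof -
  have p0: "int p \<noteq> 0" using prime_p prime_gt_1_nat by fastforce
  let ?W = "{g. aperiodic g}"
  have same: "add_cyclic A (g \<star> g) = add_cyclic A (g' \<star> g')"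
    if "aperiodic g" "g \<star> g \<noteq> 0\<^sub>A" "aperiodic g'" "g' \<star> g' \<noteq> 0\<^sub>A" for g g'
  proof (rule add_cyclic_square_eq_on[of ?W])
    show "?W \<subseteq> zeta2" unfolding aperiodic_def by blast
  qed (use that stars_subset_add_cyclic_if_aperiodic aperiodic_int_mult p0
      aperiodic_add_or_add_int_mult[of _ _ "int p"] in auto)
  obtain g where g: "aperiodic g" "g \<star> g \<noteq> 0\<^sub>A"
  proof -
    have "\<not> (\<forall>g. aperiodic g \<longrightarrow> g \<star> g = 0\<^sub>A)"
      using square_mem_if_aperiodic_squares_mem[OF c a(1) G.triv_subgroup] a(2) by blast
    then show thesis using that by blast
  qed
  have gc: "g \<star> g \<in> carrier G" using g zeta2_subset unfolding aperiodic_def by auto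
  have H: "g' \<star> g' \<in> add_cyclic A (g \<star> g)" if g': "aperiodic g'" for g'
  proof (cases "g' \<star> g' = 0\<^sub>A")
    case True
    then show ?thesis using subgroup.one_closed[OF subgroup_add_cyclic[OF gc]] by simp
  next
    case False
    have "g' \<star> g' \<in> carrier G" using g' zeta2_subset unfolding aperiodic_def by auto
    then show ?thesis using same[OF g g' False] self_in_add_cyclic by blast
  qed
  have torsion: "int p \<times>\<^sub>A (g \<star> g) = 0\<^sub>A"
    using square_p_torsion stars_subset_add_cyclic_if_aperiodic[OF aperiodic_int_mult[OF g(1) p0]] g(1)
    unfolding aperiodic_def by blast
  have "add_cyclic A (u \<star> u) = add_cyclic A (g \<star> g)" if "u \<in> zeta2" "u \<star> u \<noteq> 0\<^sub>A" for u
    using add_cyclic_eq_if_p_torsion[OF gc torsion _ that(2)]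
      square_mem_if_aperiodic_squares_mem[OF c that(1) subgroup_add_cyclic[OF gc] H] by blast
  then show ?thesis using a b by simp
qed

lemma add_cyclic_square_eq:
  assumes c: "c \<in> zeta2" "add_ord A c = 0"
    and a: "a \<in> zeta2" "a \<star> a \<noteq> 0\<^sub>A" and b: "b \<in> zeta2" "b \<star> b \<noteq> 0\<^sub>A"
  shows "add_cyclic A (a \<star> a) = add_cyclic A (b \<star> b)"
proof (cases "aperiodic c")
  case True
  then show ?thesis using add_cyclic_square_eq_if_aperiodic a b by blast
next
  case False
  then obtain n where n: "n \<noteq> 0" "n \<times>\<^sub>A c \<in> zeta" using c unfolding aperiodic_def by blast
  have cc: "c \<in> carrier G" using c zeta2_subset by blast
  have "k = 0" if "k \<times>\<^sub>A (n \<times>\<^sub>A c) = 0\<^sub>A" for k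
  proof -
    have "int (add_ord A c) dvd n * k" using that cc G.int_pow_eq_id unfolding add_ord_def by (simp add: G.int_pow_pow)
    then show ?thesis using c(2) n(1) by simp
  qed
  then show ?thesis using add_cyclic_square_eq_if_zeta_aperiodic[OF n(2)] a b by blast
qed

end

theorem lemma4p7:
  fixes A :: "'a brace" and p :: nat and a b :: 'a
  assumes "T_brace A"
    and "Factorial_Ring.prime p"
    and "\<forall>x\<in>star_center A. add_ord A x \<noteq> 0 \<longrightarrow> (\<exists>k. add_ord A x = p ^ k)"
    and "\<exists>x\<in>star_center2 A. add_ord A x = 0"
    and "a \<in> star_center2 A" and "b \<in> star_center2 A"
    and "bstar A a a \<noteq> bzero A" and "bstar A b b \<noteq> bzero A"
  shows "add_cyclic A (bstar A a a) \<inter> add_cyclic A (bstar A b b) \<noteq> {bzero A}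
       \<and> add_cyclic A (bstar A a a) = add_cyclic A (bstar A b b)"
proof -
  have "is_brace A" using assms(1) unfolding T_brace_def by blast
  then interpret T_brace_p_torsion A p using assms(1-3) by unfold_locales
  obtain c where c: "c \<in> star_center2 A" "add_ord A c = 0" using assms(4) by blast
  have a: "a \<in> zeta2" "a \<star> a \<noteq> 0\<^sub>A" and b: "b \<in> zeta2" "b \<star> b \<noteq> 0\<^sub>A"
    using star_center2_subset_zeta2 assms(5-8) unfolding bzero_def by auto
  have eq: "add_cyclic A (a \<star> a) = add_cyclic A (b \<star> b)"
    using add_cyclic_square_eq[OF _ c(2) a b] star_center2_subset_zeta2 c(1) by blast
  have "a \<in> carrier G" using a(1) zeta2_subset by blast
  then have "a \<star> a \<in> add_cyclic A (a \<star> a)" using self_in_add_cyclic[of "a \<star> a"] by simp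
  then have "a \<star> a \<in> add_cyclic A (a \<star> a) \<inter> add_cyclic A (b \<star> b)" using eq by simp
  then show ?thesis using eq a(2) unfolding bzero_def by auto
qed

end
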